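(* Let $G=(V,E)$ be a graph, $d\geq 1$, and let $u,v,w\in V$ be distinct vertices. Suppose that $u\in N_G(v)\subseteq N_G(w)\cup\{w\}$ and that $uw$ is an $\mathcal{R}_d$-bridge in $G$. Then $uv$ is an $\mathcal{R}_d$-bridge in $G-w$.
   Context: For a graph $G$, the $d$-dimensional generic rigidity matroid $\mathcal{R}_d(G)$ is the matroid on $E(G)$ given by linear independence of the rows of the rigidity matrix of a generic $d$-dimensional framework $(G,p)$ (positions with coordinates algebraically independent over $\mathbb{Q}$); it depends only on $G$. Its rank function is $r_d$, and for a graph $H$ we write $r_d(H)$ for the rank of $E(H)$. An edge $e$ of $G$ is an $\mathcal{R}_d$-bridge of $G$ if $r_d(G-e)=r_d(G)-1$. $N_G(x)$ denotes the neighbourhood of $x$. *)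

theory Defs
  imports Main "HOL.Rat" Complex_Main
begin

definition simple_graph :: "'a set \<Rightarrow> 'a set set \<Rightarrow> bool" where
  "simple_graph V E \<longleftrightarrow> finite V \<and>
     (\<forall>e\<in>E. \<exists>x y. x \<noteq> y \<and> x \<in> V \<and> y \<in> V \<and> e = {x, y})"

definition nbhd :: "'a set set \<Rightarrow> 'a \<Rightarrow> 'a set" where
  "nbhd E x = {y. {x, y} \<in> E}"

text \<open>A multivariate polynomial with rational coefficients in the variables S is
  represented as a finitely supported coefficient function on exponent vectors
  (monomials) supported in S.\<close>
definition alg_indep_rat :: "'b set \<Rightarrow> ('b \<Rightarrow> real) \<Rightarrow> bool" where
  "alg_indep_rat S x \<longleftrightarrow>
     (\<forall>P :: ('b \<Rightarrow> nat) \<Rightarrow> rat.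
        finite {m. P m \<noteq> 0} \<and>
        (\<forall>m. P m \<noteq> 0 \<longrightarrow> (\<forall>b. b \<notin> S \<longrightarrow> m b = 0)) \<and>
        (\<Sum>m\<in>{m. P m \<noteq> 0}. of_rat (P m) * (\<Prod>b\<in>S. x b ^ m b)) = 0
        \<longrightarrow> (\<forall>m. P m = 0))"

definition generic :: "nat \<Rightarrow> 'a set \<Rightarrow> ('a \<Rightarrow> nat \<Rightarrow> real) \<Rightarrow> bool" where
  "generic d V p \<longleftrightarrow> alg_indep_rat (V \<times> {..<d}) (\<lambda>(v, i). p v i)"

text \<open>Row of the rigidity matrix for the edge e = {x,y}: entry at column (x,i)
  is p x i - p y i, at (y,i) it is p y i - p x i, zero elsewhere.\<close>
definition rig_row :: "('a \<Rightarrow> nat \<Rightarrow> real) \<Rightarrow> 'a set \<Rightarrow> 'a \<Rightarrow> nat \<Rightarrow> real" where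
  "rig_row p e z i = (if z \<in> e then (\<Sum>w\<in>e - {z}. p z i - p w i) else 0)"

definition rig_indep :: "nat \<Rightarrow> ('a \<Rightarrow> nat \<Rightarrow> real) \<Rightarrow> 'a set set \<Rightarrow> bool" where
  "rig_indep d p F \<longleftrightarrow>
     (\<forall>c :: 'a set \<Rightarrow> real.
        (\<forall>z i. i < d \<longrightarrow> (\<Sum>e\<in>F. c e * rig_row p e z i) = 0) \<longrightarrow> (\<forall>e\<in>F. c e = 0))"

definition rig_rank :: "nat \<Rightarrow> 'a set \<Rightarrow> 'a set set \<Rightarrow> nat" where
  "rig_rank d V F =
     Max {card I | I. I \<subseteq> F \<and> rig_indep d (SOME p. generic d V p) I}"

definition rig_bridge :: "nat \<Rightarrow> 'a set \<Rightarrow> 'a set set \<Rightarrow> 'a set \<Rightarrow> bool" where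
  "rig_bridge d V E e \<longleftrightarrow> e \<in> E \<and> rig_rank d V (E - {e}) = rig_rank d V E - 1"

definition del_vertex_edges :: "'a set set \<Rightarrow> 'a \<Rightarrow> 'a set set" where
  "del_vertex_edges E w = {e \<in> E. w \<notin> e}"

end

theory Submission
  imports
    Defs
    "HOL-Analysis.Continuum_Not_Denumerable"
    "HOL-Analysis.Finite_Cartesian_Product"
    "Jordan_Normal_Form.Determinant"
begin

text \<open>
  Relabelling \<open>v\<close> as \<open>w\<close> maps the edges of \<open>G - w\<close> other than \<open>uv\<close> to edges of \<open>G\<close> other
  than \<open>uw\<close> (this is where \<open>N(v) \<subseteq> N(w) \<union> {w}\<close> is used) and maps \<open>uv\<close> to \<open>uw\<close>.
  Independence at a generic placement does not depend on the placement chosen: it is the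
  non-vanishing of a Gram determinant, a polynomial with rational coefficients in the
  coordinates, so it holds generically as soon as it holds at a single placement. Hence the
  relabelling preserves independence in both directions. Now \<open>e\<close> is a bridge iff it extends
  every independent set of the other edges. Given an independent \<open>K\<close> in \<open>G - w - uv\<close>, its image
  is independent in \<open>G - uw\<close>, so it extends by \<open>uw\<close>; pulling back, \<open>K\<close> extends by \<open>uv\<close>.
\<close>

section \<open>Polynomial functions with rational coefficients\<close>

definition coeff_supp :: "(('b \<Rightarrow> nat) \<Rightarrow> rat) \<Rightarrow> ('b \<Rightarrow> nat) set" where
  "coeff_supp P = {m. P m \<noteq> 0}"

definition rat_poly_in :: "'b set \<Rightarrow> (('b \<Rightarrow> nat) \<Rightarrow> rat) \<Rightarrow> bool" where
  "rat_poly_in S P \<longleftrightarrow>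
     finite (coeff_supp P) \<and> (\<forall>m\<in>coeff_supp P. \<forall>b. b \<notin> S \<longrightarrow> m b = 0)"

definition monom_val :: "'b set \<Rightarrow> ('b \<Rightarrow> real) \<Rightarrow> ('b \<Rightarrow> nat) \<Rightarrow> real" where
  "monom_val S x m = (\<Prod>b\<in>S. x b ^ m b)"

definition poly_eval :: "'b set \<Rightarrow> (('b \<Rightarrow> nat) \<Rightarrow> rat) \<Rightarrow> ('b \<Rightarrow> real) \<Rightarrow> real" where
  "poly_eval S P x = (\<Sum>m\<in>coeff_supp P. of_rat (P m) * monom_val S x m)"

definition rat_polyfun :: "'b set \<Rightarrow> (('b \<Rightarrow> real) \<Rightarrow> real) \<Rightarrow> bool" where
  "rat_polyfun S f \<longleftrightarrow> (\<exists>P. rat_poly_in S P \<and> (\<forall>x. f x = poly_eval S P x))"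

lemma alg_indep_rat_iff:
  "alg_indep_rat S x \<longleftrightarrow> (\<forall>P. rat_poly_in S P \<and> poly_eval S P x = 0 \<longrightarrow> (\<forall>m. P m = 0))"
  unfolding alg_indep_rat_def rat_poly_in_def poly_eval_def coeff_supp_def monom_val_def by auto

lemma poly_eval_mono_neutral:
  assumes "finite T" "coeff_supp P \<subseteq> T"
  shows "poly_eval S P x = (\<Sum>m\<in>T. of_rat (P m) * monom_val S x m)"
  unfolding poly_eval_def
  by (rule sum.mono_neutral_left[OF assms]) (auto simp: coeff_supp_def)

lemma rat_polyfun_nonzero_at_alg_indep:
  assumes "rat_polyfun S f" "alg_indep_rat S x" "f y \<noteq> 0"
  shows "f x \<noteq> 0"
proof
  assume "f x = 0"
  obtain P where P: "rat_poly_in S P" "\<And>x. f x = poly_eval S P x"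
    using assms(1) unfolding rat_polyfun_def by blast
  with assms(2) \<open>f x = 0\<close> have "coeff_supp P = {}"
    unfolding alg_indep_rat_iff by (auto simp: coeff_supp_def)
  with P(2) assms(3) show False by (simp add: poly_eval_def)
qed

lemma rat_polyfun_const:
  fixes S :: "'b set"
  shows "rat_polyfun S (\<lambda>x. of_rat c)"
proof -
  define P where "P m = (if m = (\<lambda>_. 0) then c else 0)" for m :: "'b \<Rightarrow> nat"
  have supp: "coeff_supp P \<subseteq> {\<lambda>_. 0}" by (auto simp: coeff_supp_def P_def)
  then have "rat_poly_in S P" unfolding rat_poly_in_def by (auto intro: finite_subset)
  moreover have "of_rat c = poly_eval S P x" for x
    by (subst poly_eval_mono_neutral[OF _ supp]) (auto simp: P_def monom_val_def)
  ultimately show ?thesis unfolding rat_polyfun_def by blast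
qed

lemma rat_polyfun_var:
  fixes S :: "'b set"
  assumes "finite S" "b \<in> S"
  shows "rat_polyfun S (\<lambda>x. x b)"
proof -
  define P where "P m = (if m = (\<lambda>_. 0)(b := 1) then 1 else 0 :: rat)" for m :: "'b \<Rightarrow> nat"
  have supp: "coeff_supp P \<subseteq> {(\<lambda>_. 0)(b := 1)}" by (auto simp: coeff_supp_def P_def)
  then have "rat_poly_in S P"
    unfolding rat_poly_in_def using assms(2) by (auto intro: finite_subset)
  moreover have "x b = poly_eval S P x" for x
  proof -
    have "monom_val S x ((\<lambda>_. 0)(b := 1)) = (\<Prod>s\<in>S. if s = b then x s else 1)"
      unfolding monom_val_def by (rule prod.cong) auto
    with assms show ?thesis
      by (subst poly_eval_mono_neutral[OF _ supp]) (auto simp: P_def prod.delta)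
  qed
  ultimately show ?thesis unfolding rat_polyfun_def by blast
qed

lemma rat_polyfun_add:
  assumes "rat_polyfun S f" "rat_polyfun S g"
  shows "rat_polyfun S (\<lambda>x. f x + g x)"
proof -
  obtain P Q where P: "rat_poly_in S P" "\<And>x. f x = poly_eval S P x"
    and Q: "rat_poly_in S Q" "\<And>x. g x = poly_eval S Q x"
    using assms unfolding rat_polyfun_def by metis
  define T where "T = coeff_supp P \<union> coeff_supp Q"
  have T: "finite T" using P(1) Q(1) by (simp add: rat_poly_in_def T_def)
  have supp: "coeff_supp (\<lambda>m. P m + Q m) \<subseteq> T" by (auto simp: coeff_supp_def T_def)
  have "rat_poly_in S (\<lambda>m. P m + Q m)"
    using P(1) Q(1) T supp unfolding rat_poly_in_def T_def
    by (auto simp: coeff_supp_def intro: finite_subset)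
  moreover have "f x + g x = poly_eval S (\<lambda>m. P m + Q m) x" for x
    unfolding P(2) Q(2) poly_eval_mono_neutral[OF T supp]
    by (simp add: poly_eval_mono_neutral[OF T] T_def of_rat_add distrib_right sum.distrib)
  ultimately show ?thesis unfolding rat_polyfun_def by blast
qed

lemma monom_val_add: "monom_val S x (\<lambda>b. m1 b + m2 b) = monom_val S x m1 * monom_val S x m2"
  unfolding monom_val_def by (simp add: power_add prod.distrib)

definition coeff_mult ::
    "(('b \<Rightarrow> nat) \<Rightarrow> rat) \<Rightarrow> (('b \<Rightarrow> nat) \<Rightarrow> rat) \<Rightarrow> ('b \<Rightarrow> nat) \<Rightarrow> rat" where
  "coeff_mult P Q m = (\<Sum>pr \<in> {pr \<in> coeff_supp P \<times> coeff_supp Q. (\<lambda>b. fst pr b + snd pr b) = m}.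
     P (fst pr) * Q (snd pr))"

lemma coeff_supp_coeff_mult:
  "coeff_supp (coeff_mult P Q) \<subseteq> (\<lambda>pr b. fst pr b + snd pr b) ` (coeff_supp P \<times> coeff_supp Q)"
proof
  fix m assume "m \<in> coeff_supp (coeff_mult P Q)"
  then have "coeff_mult P Q m \<noteq> 0" by (simp add: coeff_supp_def)
  then have "{pr \<in> coeff_supp P \<times> coeff_supp Q. (\<lambda>b. fst pr b + snd pr b) = m} \<noteq> {}"
    unfolding coeff_mult_def by (rule contrapos_nn) (simp only: sum.empty)
  then show "m \<in> (\<lambda>pr b. fst pr b + snd pr b) ` (coeff_supp P \<times> coeff_supp Q)" by blast
qed

lemma rat_poly_in_coeff_mult:
  assumes "rat_poly_in S P" "rat_poly_in S Q"
  shows "rat_poly_in S (coeff_mult P Q)"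
  unfolding rat_poly_in_def
proof (intro conjI ballI allI impI)
  have "finite (coeff_supp P)" "finite (coeff_supp Q)" using assms by (simp_all add: rat_poly_in_def)
  then show "finite (coeff_supp (coeff_mult P Q))"
    by (intro finite_subset[OF coeff_supp_coeff_mult] finite_imageI finite_cartesian_product)
  fix m b assume "m \<in> coeff_supp (coeff_mult P Q)" "b \<notin> S"
  then have "m \<in> (\<lambda>pr b. fst pr b + snd pr b) ` (coeff_supp P \<times> coeff_supp Q)"
    using coeff_supp_coeff_mult by blast
  then obtain m1 m2 where "m1 \<in> coeff_supp P" "m2 \<in> coeff_supp Q" "m = (\<lambda>b. m1 b + m2 b)"
    by auto
  with assms \<open>b \<notin> S\<close> show "m b = 0" by (simp add: rat_poly_in_def)
qed

lemma poly_eval_coeff_mult: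
  fixes P Q :: "('b \<Rightarrow> nat) \<Rightarrow> rat"
  assumes "rat_poly_in S P" "rat_poly_in S Q"
  shows "poly_eval S (coeff_mult P Q) x = poly_eval S P x * poly_eval S Q x"
proof -
  define A where "A = coeff_supp P \<times> coeff_supp Q"
  define h where "h pr = (\<lambda>b. fst pr b + snd pr b)" for pr :: "('b \<Rightarrow> nat) \<times> ('b \<Rightarrow> nat)"
  have A: "finite A" using assms by (simp add: A_def rat_poly_in_def)
  have "poly_eval S (coeff_mult P Q) x = (\<Sum>m\<in>h ` A. of_rat (coeff_mult P Q m) * monom_val S x m)"
    using A coeff_supp_coeff_mult[of P Q] unfolding A_def h_def
    by (intro poly_eval_mono_neutral) auto
  also have "\<dots> = (\<Sum>m\<in>h ` A. \<Sum>pr\<in>{pr\<in>A. h pr = m}.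
      of_rat (P (fst pr)) * of_rat (Q (snd pr)) * monom_val S x (h pr))"
  proof (rule sum.cong[OF refl])
    fix m
    show "of_rat (coeff_mult P Q m) * monom_val S x m = (\<Sum>pr\<in>{pr\<in>A. h pr = m}.
        of_rat (P (fst pr)) * of_rat (Q (snd pr)) * monom_val S x (h pr))"
      unfolding coeff_mult_def of_rat_sum sum_distrib_right A_def h_def
      by (rule sum.cong[OF refl]) (simp add: of_rat_mult)
  qed
  also have "\<dots> = (\<Sum>pr\<in>A. of_rat (P (fst pr)) * of_rat (Q (snd pr)) * monom_val S x (h pr))"
    by (rule sum.image_gen[OF A, symmetric])
  also have "\<dots> = (\<Sum>pr\<in>A. (of_rat (P (fst pr)) * monom_val S x (fst pr))
      * (of_rat (Q (snd pr)) * monom_val S x (snd pr)))"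
    by (rule sum.cong[OF refl]) (simp add: h_def monom_val_add)
  also have "\<dots> = poly_eval S P x * poly_eval S Q x"
    unfolding A_def poly_eval_def sum_product sum.cartesian_product by (simp add: case_prod_beta)
  finally show ?thesis .
qed

lemma rat_polyfun_mult:
  assumes "rat_polyfun S f" "rat_polyfun S g"
  shows "rat_polyfun S (\<lambda>x. f x * g x)"
proof -
  obtain P Q where "rat_poly_in S P" "\<And>x. f x = poly_eval S P x"
    and "rat_poly_in S Q" "\<And>x. g x = poly_eval S Q x"
    using assms unfolding rat_polyfun_def by metis
  then show ?thesis
    unfolding rat_polyfun_def
    by (intro exI[of _ "coeff_mult P Q"]) (simp add: rat_poly_in_coeff_mult poly_eval_coeff_mult)
qed

lemma rat_polyfun_diff:
  assumes "rat_polyfun S f" "rat_polyfun S g"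
  shows "rat_polyfun S (\<lambda>x. f x - g x)"
  using rat_polyfun_add[OF assms(1) rat_polyfun_mult[OF rat_polyfun_const[of S "-1"] assms(2)]]
  by (simp add: of_rat_minus)

lemma rat_polyfun_sum:
  assumes "finite A" "\<And>a. a \<in> A \<Longrightarrow> rat_polyfun S (f a)"
  shows "rat_polyfun S (\<lambda>x. \<Sum>a\<in>A. f a x)"
  using assms
  by (induction A rule: finite_induct) (auto intro: rat_polyfun_add rat_polyfun_const[of S 0, simplified])

lemma rat_polyfun_prod:
  assumes "finite A" "\<And>a. a \<in> A \<Longrightarrow> rat_polyfun S (f a)"
  shows "rat_polyfun S (\<lambda>x. \<Prod>a\<in>A. f a x)"
  using assms
  by (induction A rule: finite_induct) (auto intro: rat_polyfun_mult rat_polyfun_const[of S 1, simplified])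

section \<open>Existence of algebraically independent reals\<close>

lemma alg_indep_rat_empty: "alg_indep_rat {} x"
  unfolding alg_indep_rat_iff
proof (intro allI impI)
  fix P :: "('a \<Rightarrow> nat) \<Rightarrow> rat" and m
  assume P: "rat_poly_in {} P \<and> poly_eval {} P x = 0"
  then have supp: "coeff_supp P \<subseteq> {\<lambda>_. 0}" by (auto simp: rat_poly_in_def)
  have "poly_eval {} P x = of_rat (P (\<lambda>_. 0))"
    by (subst poly_eval_mono_neutral[OF _ supp]) (auto simp: monom_val_def)
  with P supp show "P m = 0" by (auto simp: coeff_supp_def)
qed

text \<open>The coefficient of \<open>b ^ j\<close> in \<open>P\<close>, as a polynomial in the remaining variables \<open>S\<close>.\<close>
definition coeff_poly ::
    "'b set \<Rightarrow> 'b \<Rightarrow> nat \<Rightarrow> (('b \<Rightarrow> nat) \<Rightarrow> rat) \<Rightarrow> ('b \<Rightarrow> nat) \<Rightarrow> rat" where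
  "coeff_poly S b j P m = (if \<forall>s. s \<notin> S \<longrightarrow> m s = 0 then P (m(b := j)) else 0)"

lemma coeff_supp_coeff_poly:
  assumes "rat_poly_in (insert b S) P" "b \<notin> S"
  shows "coeff_supp (coeff_poly S b j P) = (\<lambda>m. m(b := 0)) ` {m \<in> coeff_supp P. m b = j}"
proof (intro equalityI subsetI)
  fix m assume "m \<in> coeff_supp (coeff_poly S b j P)"
  then have "\<forall>s. s \<notin> S \<longrightarrow> m s = 0" "m(b := j) \<in> coeff_supp P"
    by (auto simp: coeff_supp_def coeff_poly_def split: if_splits)
  moreover from this have "m = (m(b := j))(b := 0)" using assms(2) by auto
  ultimately show "m \<in> (\<lambda>m. m(b := 0)) ` {m \<in> coeff_supp P. m b = j}"
    by (intro image_eqI[of _ _ "m(b := j)"]) auto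
next
  fix m' assume "m' \<in> (\<lambda>m. m(b := 0)) ` {m \<in> coeff_supp P. m b = j}"
  then obtain m where m: "m \<in> coeff_supp P" "m b = j" "m' = m(b := 0)" by blast
  with assms(1) have "\<forall>s. s \<notin> S \<longrightarrow> m' s = 0" by (auto simp: rat_poly_in_def)
  moreover have "m'(b := j) = m" using m by auto
  ultimately show "m' \<in> coeff_supp (coeff_poly S b j P)"
    using m(1) by (simp add: coeff_supp_def coeff_poly_def)
qed

lemma rat_poly_in_coeff_poly:
  assumes "rat_poly_in (insert b S) P" "b \<notin> S"
  shows "rat_poly_in S (coeff_poly S b j P)"
  using assms coeff_supp_coeff_poly[OF assms, of j]
  by (auto simp: rat_poly_in_def coeff_supp_def coeff_poly_def)

lemma poly_eval_coeff_poly: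
  assumes "rat_poly_in (insert b S) P" "b \<notin> S"
  shows "poly_eval S (coeff_poly S b j P) x =
    (\<Sum>m\<in>{m \<in> coeff_supp P. m b = j}. of_rat (P m) * monom_val S x m)"
proof -
  have inj: "inj_on (\<lambda>m. m(b := 0)) {m \<in> coeff_supp P. m b = j}"
    by (rule inj_onI) (metis (mono_tags, lifting) fun_upd_idem_iff fun_upd_upd mem_Collect_eq)
  have "coeff_poly S b j P (m(b := 0)) = P m" if "m \<in> coeff_supp P" "m b = j" for m
    using assms(1) that by (auto simp: coeff_poly_def rat_poly_in_def)
  moreover have "monom_val S x (m(b := 0)) = monom_val S x m" for m
    unfolding monom_val_def using assms(2) by (intro prod.cong) auto
  ultimately show ?thesis
    unfolding poly_eval_def coeff_supp_coeff_poly[OF assms] sum.reindex[OF inj] by simp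
qed

lemma poly_eval_fun_upd_eq_sum_coeff:
  assumes "finite S" "b \<notin> S" "rat_poly_in (insert b S) P"
    and "\<And>m. m \<in> coeff_supp P \<Longrightarrow> m b \<le> n"
  shows "poly_eval (insert b S) P (x(b := t)) =
    (\<Sum>j\<le>n. poly_eval S (coeff_poly S b j P) x * t ^ j)"
proof -
  have fin: "finite (coeff_supp P)" using assms(3) by (simp add: rat_poly_in_def)
  have monom: "monom_val (insert b S) (x(b := t)) m = monom_val S x m * t ^ m b" for m
  proof -
    have "(\<Prod>s\<in>S. (x(b := t)) s ^ m s) = monom_val S x m"
      unfolding monom_val_def using assms(2) by (intro prod.cong) auto
    then show ?thesis using assms(1,2) by (simp add: monom_val_def)
  qed
  have "poly_eval (insert b S) P (x(b := t)) =
      (\<Sum>m\<in>coeff_supp P. of_rat (P m) * monom_val S x m * t ^ m b)"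
    unfolding poly_eval_def monom by (simp add: mult.assoc)
  also have "\<dots> = (\<Sum>j\<in>(\<lambda>m. m b) ` coeff_supp P.
      \<Sum>m\<in>{m \<in> coeff_supp P. m b = j}. of_rat (P m) * monom_val S x m * t ^ m b)"
    by (rule sum.image_gen[OF fin])
  also have "\<dots> = (\<Sum>j\<in>(\<lambda>m. m b) ` coeff_supp P. poly_eval S (coeff_poly S b j P) x * t ^ j)"
    unfolding poly_eval_coeff_poly[OF assms(3,2)] sum_distrib_right by (intro sum.cong) auto
  also have "\<dots> = (\<Sum>j\<le>n. poly_eval S (coeff_poly S b j P) x * t ^ j)"
  proof (rule sum.mono_neutral_left)
    show "\<forall>j\<in>{..n} - (\<lambda>m. m b) ` coeff_supp P. poly_eval S (coeff_poly S b j P) x * t ^ j = 0"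
      unfolding poly_eval_coeff_poly[OF assms(3,2)] by (auto intro: sum.neutral)
  qed (use assms(4) in auto)
  finally show ?thesis .
qed

text \<open>Specialising one new variable of a nonzero polynomial to \<open>t\<close> leaves a nonzero
  univariate polynomial in \<open>t\<close>: its coefficients are values of nonzero polynomials
  at the algebraically independent point \<open>x\<close>.\<close>
lemma finite_roots_fun_upd:
  assumes "finite S" "b \<notin> S" "alg_indep_rat S x" "rat_poly_in (insert b S) P" "P m0 \<noteq> 0"
  shows "finite {t. poly_eval (insert b S) P (x(b := t)) = 0}"
proof -
  have fin: "finite (coeff_supp P)" using assms(4) by (simp add: rat_poly_in_def)
  define n where "n = Max ((\<lambda>m. m b) ` coeff_supp P)"
  have m0: "m0 \<in> coeff_supp P" using assms(5) by (simp add: coeff_supp_def)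
  have "m0 s = 0" if "s \<notin> insert b S" for s
    using assms(4) m0 that unfolding rat_poly_in_def by blast
  then have "\<forall>s. s \<notin> S \<longrightarrow> (m0(b := 0)) s = 0" by simp
  then have "coeff_poly S b (m0 b) P (m0(b := 0)) \<noteq> 0"
    using assms(5) by (simp add: coeff_poly_def)
  then have "poly_eval S (coeff_poly S b (m0 b) P) x \<noteq> 0"
    using assms(3) rat_poly_in_coeff_poly[OF assms(4,2)] unfolding alg_indep_rat_iff by blast
  moreover have "m0 b \<le> n" unfolding n_def using fin m0 by simp
  ultimately have "finite {t. (\<Sum>j\<le>n. poly_eval S (coeff_poly S b j P) x * t ^ j) = 0}"
    by (rule polyfun_roots_finite)
  moreover have "poly_eval (insert b S) P (x(b := t)) =
      (\<Sum>j\<le>n. poly_eval S (coeff_poly S b j P) x * t ^ j)" for t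
    by (rule poly_eval_fun_upd_eq_sum_coeff[OF assms(1,2,4)]) (simp add: n_def fin)
  ultimately show ?thesis by simp
qed

lemma countable_monomials:
  fixes S :: "'b set"
  assumes "finite S"
  shows "countable {m :: 'b \<Rightarrow> nat. \<forall>s. s \<notin> S \<longrightarrow> m s = 0}"
proof (rule countable_subset)
  show "{m :: 'b \<Rightarrow> nat. \<forall>s. s \<notin> S \<longrightarrow> m s = 0} \<subseteq>
      (\<lambda>g s. if s \<in> S then g s else 0) ` (S \<rightarrow>\<^sub>E UNIV)"
  proof
    fix m :: "'b \<Rightarrow> nat" assume "m \<in> {m. \<forall>s. s \<notin> S \<longrightarrow> m s = 0}"
    then have "m = (\<lambda>s. if s \<in> S then restrict m S s else 0)" by auto
    then show "m \<in> (\<lambda>g s. if s \<in> S then g s else 0) ` (S \<rightarrow>\<^sub>E UNIV)" by force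
  qed
qed (intro countable_image countable_PiE assms, simp)

lemma countable_rat_poly_in:
  fixes S :: "'b set"
  assumes "finite S"
  shows "countable {P. rat_poly_in S P}"
proof (rule countable_subset)
  define Mon where "Mon = {m :: 'b \<Rightarrow> nat. \<forall>s. s \<notin> S \<longrightarrow> m s = 0}"
  define extend where
    "extend F g m = (if m \<in> F then g m else 0 :: rat)" for F and g and m :: "'b \<Rightarrow> nat"
  show "{P. rat_poly_in S P} \<subseteq> (\<Union>F\<in>{F. finite F \<and> F \<subseteq> Mon}. extend F ` (F \<rightarrow>\<^sub>E UNIV))"
  proof
    fix P assume "P \<in> {P. rat_poly_in S P}"
    then have "coeff_supp P \<in> {F. finite F \<and> F \<subseteq> Mon}"
      by (auto simp: rat_poly_in_def Mon_def)
    moreover have "P = extend (coeff_supp P) (restrict P (coeff_supp P))"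
      by (auto simp: extend_def coeff_supp_def)
    moreover have "restrict P (coeff_supp P) \<in> coeff_supp P \<rightarrow>\<^sub>E UNIV" by simp
    ultimately show "P \<in> (\<Union>F\<in>{F. finite F \<and> F \<subseteq> Mon}. extend F ` (F \<rightarrow>\<^sub>E UNIV))"
      by blast
  qed
  show "countable (\<Union>F\<in>{F. finite F \<and> F \<subseteq> Mon}. extend F ` (F \<rightarrow>\<^sub>E UNIV))"
  proof (rule countable_UN)
    show "countable {F. finite F \<and> F \<subseteq> Mon}"
      unfolding Mon_def by (rule countable_Collect_finite_subset[OF countable_monomials[OF assms]])
    fix F assume "F \<in> {F. finite F \<and> F \<subseteq> Mon}"
    then show "countable (extend F ` (F \<rightarrow>\<^sub>E UNIV))"
      by (intro countable_image countable_PiE) auto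
  qed
qed

text \<open>Induction on \<open>S\<close>: a new variable can avoid the countably many roots of the
  countably many nonzero polynomials specialised at the previous variables.\<close>
lemma ex_alg_indep_rat:
  fixes S :: "'b set"
  assumes "finite S"
  shows "\<exists>x. alg_indep_rat S x"
  using assms
proof (induction S rule: finite_induct)
  case empty
  show ?case using alg_indep_rat_empty by blast
next
  case (insert b S)
  then obtain x where x: "alg_indep_rat S x" by blast
  define bad where "bad = (\<Union>P\<in>{P. rat_poly_in (insert b S) P \<and> (\<exists>m. P m \<noteq> 0)}.
    {t. poly_eval (insert b S) P (x(b := t)) = 0})"
  have "countable bad"
    unfolding bad_def
  proof (rule countable_UN)
    show "countable {P. rat_poly_in (insert b S) P \<and> (\<exists>m. P m \<noteq> 0)}"
      by (rule countable_subset[OF _ countable_rat_poly_in[of "insert b S"]]) (use insert(1) in auto)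
    fix P assume "P \<in> {P. rat_poly_in (insert b S) P \<and> (\<exists>m. P m \<noteq> 0)}"
    then obtain m0 where "rat_poly_in (insert b S) P" "P m0 \<noteq> 0" by blast
    then show "countable {t. poly_eval (insert b S) P (x(b := t)) = 0}"
      by (intro countable_finite finite_roots_fun_upd[OF insert(1,2) x])
  qed
  then have "bad \<noteq> UNIV" using uncountable_UNIV_real by auto
  then obtain t where t: "t \<notin> bad" by blast
  have "alg_indep_rat (insert b S) (x(b := t))"
    unfolding alg_indep_rat_iff
  proof (intro allI impI)
    fix P m assume "rat_poly_in (insert b S) P \<and> poly_eval (insert b S) P (x(b := t)) = 0"
    with t show "P m = 0" unfolding bad_def by blast
  qed
  then show ?case by blast
qed

lemma generic_some:
  assumes "finite V"
  shows "generic d V (SOME p. generic d V p)"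
proof -
  obtain x where "alg_indep_rat (V \<times> {..<d}) x" using ex_alg_indep_rat[of "V \<times> {..<d}"] assms by auto
  then have "generic d V (\<lambda>v i. x (v, i))" by (simp add: generic_def case_prod_beta')
  then show ?thesis by (rule someI[where P = "generic d V"])
qed

section \<open>Generic independence via Gram determinants\<close>

definition gram :: "nat \<Rightarrow> 'a set \<Rightarrow> ('a \<Rightarrow> nat \<Rightarrow> real) \<Rightarrow> 'a set \<Rightarrow> 'a set \<Rightarrow> real" where
  "gram d U p e f = (\<Sum>z\<in>U. \<Sum>i<d. rig_row p e z i * rig_row p f z i)"

definition gram_mat :: "nat \<Rightarrow> 'a set \<Rightarrow> ('a \<Rightarrow> nat \<Rightarrow> real) \<Rightarrow> 'a set list \<Rightarrow> real mat" where
  "gram_mat d U p es = mat (length es) (length es) (\<lambda>(a, b). gram d U p (es ! a) (es ! b))"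

lemma rig_row_notin: "z \<notin> e \<Longrightarrow> rig_row p e z i = 0"
  by (simp add: rig_row_def)

lemma rig_indep_set_iff:
  assumes "distinct es"
  shows "rig_indep d p (set es) \<longleftrightarrow>
    (\<forall>v \<in> carrier_vec (length es).
      (\<forall>z i. i < d \<longrightarrow> (\<Sum>a<length es. v $ a * rig_row p (es ! a) z i) = 0) \<longrightarrow> v = 0\<^sub>v (length es))"
proof -
  have bij: "bij_betw ((!) es) {..<length es} (set es)" by (rule bij_betw_nth[OF assms refl refl])
  have reindex: "(\<Sum>a<length es. g (es ! a)) = (\<Sum>e\<in>set es. g e)" for g :: "'a set \<Rightarrow> real"
    using sum.reindex_bij_betw[OF bij] .
  show ?thesis
    unfolding rig_indep_def
  proof safe
    fix v :: "real vec"
    assume indep: "\<forall>c. (\<forall>z i. i < d \<longrightarrow> (\<Sum>e\<in>set es. c e * rig_row p e z i) = 0)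
        \<longrightarrow> (\<forall>e\<in>set es. c e = 0)"
      and v: "v \<in> carrier_vec (length es)"
      and comb: "\<forall>z i. i < d \<longrightarrow> (\<Sum>a<length es. v $ a * rig_row p (es ! a) z i) = 0"
    define c where "c e = v $ inv_into {..<length es} ((!) es) e" for e
    have c_nth: "c (es ! a) = v $ a" if "a < length es" for a
      using bij_betw_inv_into_left[OF bij] that by (simp add: c_def)
    have "(\<Sum>e\<in>set es. c e * rig_row p e z i) = 0" if "i < d" for z i
      using comb that by (simp add: reindex[symmetric] c_nth)
    with indep have "\<forall>e\<in>set es. c e = 0" by blast
    then show "v = 0\<^sub>v (length es)" using v by (intro eq_vecI) (auto simp flip: c_nth)
  next
    fix c :: "'a set \<Rightarrow> real" and e
    assume indep: "\<forall>v\<in>carrier_vec (length es).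
        (\<forall>z i. i < d \<longrightarrow> (\<Sum>a<length es. v $ a * rig_row p (es ! a) z i) = 0)
        \<longrightarrow> v = 0\<^sub>v (length es)"
      and comb: "\<forall>z i. i < d \<longrightarrow> (\<Sum>e\<in>set es. c e * rig_row p e z i) = 0"
      and e: "e \<in> set es"
    define v where "v = vec (length es) (\<lambda>a. c (es ! a))"
    have "(\<Sum>a<length es. v $ a * rig_row p (es ! a) z i) = 0" if "i < d" for z i
      using comb that reindex[of "\<lambda>e. c e * rig_row p e z i"] by (simp add: v_def)
    with indep have "v = 0\<^sub>v (length es)" by (simp add: v_def)
    moreover obtain a where "a < length es" "e = es ! a" using e by (auto simp: in_set_conv_nth)
    ultimately show "c e = 0" by (metis index_vec index_zero_vec(1) v_def)
  qed
qed

lemma gram_mat_mult_vec_eq_0_iff: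
  assumes "finite U" "\<forall>e\<in>set es. e \<subseteq> U" "v \<in> carrier_vec (length es)"
  shows "gram_mat d U p es *\<^sub>v v = 0\<^sub>v (length es) \<longleftrightarrow>
    (\<forall>z i. i < d \<longrightarrow> (\<Sum>a<length es. v $ a * rig_row p (es ! a) z i) = 0)"
    (is "_ \<longleftrightarrow> (\<forall>z i. i < d \<longrightarrow> ?comb z i = 0)")
proof -
  let ?G = "gram_mat d U p es" and ?k = "length es"
  have entry: "(?G *\<^sub>v v) $ a = (\<Sum>z\<in>U. \<Sum>i<d. rig_row p (es ! a) z i * ?comb z i)" if "a < ?k" for a
    using assms(3) that
    by (simp add: gram_mat_def gram_def scalar_prod_def row_def atLeast0LessThan sum_distrib_left
        sum_distrib_right mult_ac sum.swap[of _ "{..<?k}"])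
  have comb_outside: "?comb z i = 0" if "z \<notin> U" for z i
    using assms(2) that by (auto intro!: sum.neutral rig_row_notin) (meson nth_mem subsetD)
  show ?thesis
  proof
    assume "?G *\<^sub>v v = 0\<^sub>v ?k"
    then have "(\<Sum>a<?k. v $ a * (?G *\<^sub>v v) $ a) = 0" by simp
    also have "(\<Sum>a<?k. v $ a * (?G *\<^sub>v v) $ a) =
        (\<Sum>a<?k. \<Sum>z\<in>U. \<Sum>i<d. v $ a * rig_row p (es ! a) z i * ?comb z i)"
      by (simp add: entry sum_distrib_left mult.assoc)
    also have "\<dots> = (\<Sum>z\<in>U. \<Sum>a<?k. \<Sum>i<d. v $ a * rig_row p (es ! a) z i * ?comb z i)"
      by (rule sum.swap)
    also have "\<dots> = (\<Sum>z\<in>U. \<Sum>i<d. \<Sum>a<?k. v $ a * rig_row p (es ! a) z i * ?comb z i)"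
      by (rule sum.cong[OF refl], rule sum.swap)
    also have "\<dots> = (\<Sum>z\<in>U. \<Sum>i<d. (?comb z i)\<^sup>2)"
      by (simp add: sum_distrib_right power2_eq_square)
    finally have "\<forall>z\<in>U. \<forall>i<d. (?comb z i)\<^sup>2 = 0"
      using assms(1) by (simp add: sum_nonneg sum_nonneg_eq_0_iff)
    then show "\<forall>z i. i < d \<longrightarrow> ?comb z i = 0" using comb_outside by auto
  next
    assume "\<forall>z i. i < d \<longrightarrow> ?comb z i = 0"
    then have "(?G *\<^sub>v v) $ a = 0" if "a < ?k" for a by (subst entry[OF that]) simp
    moreover have "dim_vec (?G *\<^sub>v v) = ?k" by (simp add: gram_mat_def)
    ultimately show "?G *\<^sub>v v = 0\<^sub>v ?k" by (intro eq_vecI) simp_all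
  qed
qed

lemma rig_indep_iff_det_gram:
  assumes "finite U" "\<forall>e\<in>set es. e \<subseteq> U" "distinct es"
  shows "rig_indep d p (set es) \<longleftrightarrow> det (gram_mat d U p es) \<noteq> 0"
proof -
  have "gram_mat d U p es \<in> carrier_mat (length es) (length es)" by (simp add: gram_mat_def)
  from det_0_iff_vec_prod_zero[OF this] show ?thesis
    unfolding rig_indep_set_iff[OF assms(3)] using gram_mat_mult_vec_eq_0_iff[OF assms(1,2)] by blast
qed

lemma rat_polyfun_rig_row:
  assumes "finite U" "e \<subseteq> U" "z \<in> U" "i < d"
  shows "rat_polyfun (U \<times> {..<d}) (\<lambda>x. rig_row (\<lambda>v j. x (v, j)) e z i)"
proof (cases "z \<in> e")
  case True
  have "rat_polyfun (U \<times> {..<d}) (\<lambda>x. \<Sum>w\<in>e - {z}. x (z, i) - x (w, i))"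
    using assms finite_subset[OF assms(2,1)]
    by (intro rat_polyfun_sum rat_polyfun_diff rat_polyfun_var) auto
  with True show ?thesis by (simp add: rig_row_def)
next
  case False
  then show ?thesis using rat_polyfun_const[of _ 0] by (simp add: rig_row_def)
qed

lemma rat_polyfun_det_gram:
  assumes "finite U" "\<forall>e\<in>set es. e \<subseteq> U"
  shows "rat_polyfun (U \<times> {..<d}) (\<lambda>x. det (gram_mat d U (\<lambda>v j. x (v, j)) es))"
proof -
  let ?k = "length es"
  have det_eq: "det (gram_mat d U (\<lambda>v j. x (v, j)) es) =
      (\<Sum>\<pi> \<in> {\<pi>. \<pi> permutes {0..<?k}}. of_rat (of_int (sign \<pi>)) *
        (\<Prod>a = 0..<?k. gram d U (\<lambda>v j. x (v, j)) (es ! a) (es ! \<pi> a)))" for x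
    by (subst det_def'[of _ ?k]) (auto simp: gram_mat_def of_rat_of_int_eq permutes_in_image
        intro!: sum.cong prod.cong)
  have "rat_polyfun (U \<times> {..<d}) (\<lambda>x. gram d U (\<lambda>v j. x (v, j)) e f)"
    if "e \<subseteq> U" "f \<subseteq> U" for e f
    unfolding gram_def using assms(1) that
    by (intro rat_polyfun_sum rat_polyfun_mult rat_polyfun_rig_row) auto
  then show ?thesis
    unfolding det_eq using assms(2)
    by (intro rat_polyfun_sum rat_polyfun_mult rat_polyfun_const rat_polyfun_prod)
      (auto simp: finite_permutations permutes_in_image)
qed

lemma rig_indep_generic:
  assumes "finite U" "generic d U p" "finite I" "\<forall>e\<in>I. e \<subseteq> U" "rig_indep d r I"
  shows "rig_indep d p I"
proof -
  obtain es where es: "set es = I" "distinct es" using finite_distinct_list[OF assms(3)] by blast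
  define D where "D x = det (gram_mat d U (\<lambda>v j. x (v, j)) es)" for x
  have "rat_polyfun (U \<times> {..<d}) D"
    unfolding D_def using rat_polyfun_det_gram assms(1,4) es(1) by blast
  moreover have "alg_indep_rat (U \<times> {..<d}) (\<lambda>(v, j). p v j)"
    using assms(2) by (simp add: generic_def)
  moreover have "D (\<lambda>(v, j). r v j) \<noteq> 0"
    using assms(5) rig_indep_iff_det_gram[OF assms(1) _ es(2)] assms(4) es(1) by (simp add: D_def)
  ultimately have "D (\<lambda>(v, j). p v j) \<noteq> 0" by (rule rat_polyfun_nonzero_at_alg_indep)
  then show ?thesis
    using rig_indep_iff_det_gram[OF assms(1) _ es(2)] assms(4) es(1) by (simp add: D_def)
qed

lemma rig_indep_edge:
  assumes "0 < d" "x \<noteq> y" "p x 0 \<noteq> p y 0"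
  shows "rig_indep d p {{x, y}}"
  unfolding rig_indep_def
proof (intro allI impI)
  fix c assume "\<forall>z i. i < d \<longrightarrow> (\<Sum>e\<in>{{x, y}}. c e * rig_row p e z i) = 0"
  then have "c {x, y} * rig_row p {x, y} x 0 = 0" using assms(1) by simp
  moreover have "rig_row p {x, y} x 0 = p x 0 - p y 0"
    using assms(2) by (simp add: rig_row_def insert_Diff_if)
  ultimately show "\<forall>e\<in>{{x, y}}. c e = 0" using assms(3) by simp
qed

lemma rig_indep_generic_edge:
  assumes "finite V" "generic d V p" "0 < d" "x \<in> V" "y \<in> V" "x \<noteq> y"
  shows "rig_indep d p {{x, y}}"
proof (rule rig_indep_generic[OF assms(1,2)])
  show "rig_indep d (\<lambda>z i. if z = x then 1 else 0) {{x, y}}"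
    using assms(3,6) by (intro rig_indep_edge) auto
qed (use assms(4,5) in auto)

section \<open>Rank in the rigidity matroid\<close>

lemma rig_indep_empty: "rig_indep d p {}"
  by (simp add: rig_indep_def)

lemma rig_indepD:
  assumes "rig_indep d p F" "\<And>z i. i < d \<Longrightarrow> (\<Sum>e\<in>F. c e * rig_row p e z i) = 0" "e \<in> F"
  shows "c e = 0"
  using assms by (simp add: rig_indep_def)

lemma rig_indep_subset:
  assumes "finite I" "J \<subseteq> I" "rig_indep d p I"
  shows "rig_indep d p J"
  unfolding rig_indep_def
proof (intro allI impI)
  fix c assume c: "\<forall>z i. i < d \<longrightarrow> (\<Sum>e\<in>J. c e * rig_row p e z i) = 0"
  define c' where "c' e = (if e \<in> J then c e else 0)" for e
  have "(\<Sum>e\<in>I. c' e * rig_row p e z i) = (\<Sum>e\<in>J. c e * rig_row p e z i)" for z i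
    by (rule sum.mono_neutral_cong_right[OF assms(1,2)]) (auto simp: c'_def)
  with c have "\<forall>z i. i < d \<longrightarrow> (\<Sum>e\<in>I. c' e * rig_row p e z i) = 0" by simp
  with assms(3) have "\<forall>e\<in>I. c' e = 0" unfolding rig_indep_def by blast
  show "\<forall>e\<in>J. c e = 0"
  proof
    fix e assume "e \<in> J"
    with assms(2) \<open>\<forall>e\<in>I. c' e = 0\<close> have "c' e = 0" by blast
    with \<open>e \<in> J\<close> show "c e = 0" by (simp add: c'_def)
  qed
qed

definition in_rig_span :: "nat \<Rightarrow> ('a \<Rightarrow> nat \<Rightarrow> real) \<Rightarrow> 'a set set \<Rightarrow> 'a set \<Rightarrow> bool" where
  "in_rig_span d p K g \<longleftrightarrow>
     (\<exists>c. \<forall>z i. i < d \<longrightarrow> rig_row p g z i = (\<Sum>f\<in>K. c f * rig_row p f z i))"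

lemma in_rig_span_mem:
  assumes "finite K" "f \<in> K"
  shows "in_rig_span d p K f"
  unfolding in_rig_span_def
proof (intro exI allI impI)
  fix z i
  have "(\<Sum>h\<in>K. (if h = f then 1 else 0) * rig_row p h z i) =
      (\<Sum>h\<in>K. if h = f then rig_row p h z i else 0)"
    by (rule sum.cong) auto
  then show "rig_row p f z i = (\<Sum>h\<in>K. (if h = f then 1 else 0) * rig_row p h z i)"
    using assms by (simp add: sum.delta)
qed

lemma in_rig_span_trans:
  assumes "\<forall>f\<in>K. in_rig_span d p I f" "in_rig_span d p K g"
  shows "in_rig_span d p I g"
proof -
  from assms(1) have "\<forall>f\<in>K. \<exists>c. \<forall>z i. i < d \<longrightarrow> rig_row p f z i = (\<Sum>h\<in>I. c h * rig_row p h z i)"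
    unfolding in_rig_span_def .
  then have "\<exists>B. \<forall>f\<in>K. \<forall>z i. i < d \<longrightarrow> rig_row p f z i = (\<Sum>h\<in>I. B f h * rig_row p h z i)"
    by (rule bchoice)
  then obtain B where B: "\<forall>f\<in>K. \<forall>z i. i < d \<longrightarrow> rig_row p f z i = (\<Sum>h\<in>I. B f h * rig_row p h z i)"
    by blast
  obtain a where a: "\<forall>z i. i < d \<longrightarrow> rig_row p g z i = (\<Sum>f\<in>K. a f * rig_row p f z i)"
    using assms(2) unfolding in_rig_span_def by blast
  have "rig_row p g z i = (\<Sum>h\<in>I. (\<Sum>f\<in>K. a f * B f h) * rig_row p h z i)" if "i < d" for z i
  proof -
    have "rig_row p g z i = (\<Sum>f\<in>K. a f * rig_row p f z i)" using a that by blast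
    also have "\<dots> = (\<Sum>f\<in>K. a f * (\<Sum>h\<in>I. B f h * rig_row p h z i))"
    proof (rule sum.cong[OF refl])
      fix f assume "f \<in> K"
      with B that have "rig_row p f z i = (\<Sum>h\<in>I. B f h * rig_row p h z i)" by blast
      then show "a f * rig_row p f z i = a f * (\<Sum>h\<in>I. B f h * rig_row p h z i)" by simp
    qed
    also have "\<dots> = (\<Sum>f\<in>K. \<Sum>h\<in>I. a f * B f h * rig_row p h z i)"
      by (simp add: sum_distrib_left mult.assoc)
    also have "\<dots> = (\<Sum>h\<in>I. (\<Sum>f\<in>K. a f * B f h) * rig_row p h z i)"
      by (subst sum.swap) (simp add: sum_distrib_right)
    finally show ?thesis .
  qed
  then show ?thesis unfolding in_rig_span_def by (auto intro!: exI[of _ "\<lambda>h. \<Sum>f\<in>K. a f * B f h"])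
qed

lemma not_in_rig_span_if_rig_indep_insert:
  assumes "finite K" "g \<notin> K" "rig_indep d p (insert g K)"
  shows "\<not> in_rig_span d p K g"
proof
  assume "in_rig_span d p K g"
  then obtain c where c: "\<forall>z i. i < d \<longrightarrow> rig_row p g z i = (\<Sum>f\<in>K. c f * rig_row p f z i)"
    unfolding in_rig_span_def by blast
  have "(\<Sum>f\<in>insert g K. (c(g := -1)) f * rig_row p f z i) = 0" if "i < d" for z i
  proof -
    have "(\<Sum>f\<in>K. (c(g := -1)) f * rig_row p f z i) = (\<Sum>f\<in>K. c f * rig_row p f z i)"
      using assms(2) by (intro sum.cong) auto
    then show ?thesis using assms(1,2) c that by simp
  qed
  with assms(3) have "(c(g := -1)) g = 0" unfolding rig_indep_def by blast
  then show False by simp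
qed

lemma rig_indep_insert_if_not_in_rig_span:
  assumes "finite K" "rig_indep d p K" "g \<notin> K" "\<not> in_rig_span d p K g"
  shows "rig_indep d p (insert g K)"
  unfolding rig_indep_def
proof (intro allI impI)
  fix c assume "\<forall>z i. i < d \<longrightarrow> (\<Sum>e\<in>insert g K. c e * rig_row p e z i) = 0"
  then have comb: "c g * rig_row p g z i + (\<Sum>e\<in>K. c e * rig_row p e z i) = 0" if "i < d" for z i
    using assms(1,3) that by simp
  have "c g = 0"
  proof (rule ccontr)
    assume "c g \<noteq> 0"
    have "rig_row p g z i = (\<Sum>f\<in>K. (- c f / c g) * rig_row p f z i)" if "i < d" for z i
    proof -
      have "(\<Sum>e\<in>K. c e * rig_row p e z i) = - (c g * rig_row p g z i)"
        using comb[of i z] that by linarith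
      then have "(\<Sum>f\<in>K. (- c f / c g) * rig_row p f z i) = c g * rig_row p g z i / c g"
        by (simp add: sum_divide_distrib[symmetric] sum_negf)
      with \<open>c g \<noteq> 0\<close> show ?thesis by simp
    qed
    then have "in_rig_span d p K g"
      unfolding in_rig_span_def by (intro exI[of _ "\<lambda>f. - c f / c g"]) blast
    with assms(4) show False by contradiction
  qed
  with comb have "\<forall>z i. i < d \<longrightarrow> (\<Sum>e\<in>K. c e * rig_row p e z i) = 0" by simp
  with assms(2) \<open>c g = 0\<close> show "\<forall>e\<in>insert g K. c e = 0" unfolding rig_indep_def by blast
qed

lemma rig_indep_insert_iff:
  assumes "finite K" "rig_indep d p K" "g \<notin> K"
  shows "rig_indep d p (insert g K) \<longleftrightarrow> \<not> in_rig_span d p K g"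
  using assms not_in_rig_span_if_rig_indep_insert rig_indep_insert_if_not_in_rig_span by blast

definition rig_rank_at :: "nat \<Rightarrow> ('a \<Rightarrow> nat \<Rightarrow> real) \<Rightarrow> 'a set set \<Rightarrow> nat" where
  "rig_rank_at d p F = Max {card I | I. I \<subseteq> F \<and> rig_indep d p I}"

lemma rig_rank_eq_rig_rank_at: "rig_rank d V F = rig_rank_at d (SOME p. generic d V p) F"
  by (simp add: rig_rank_def rig_rank_at_def)

lemma finite_rig_indep_cards:
  assumes "finite F"
  shows "finite {card I | I. I \<subseteq> F \<and> rig_indep d p I}"
proof (rule finite_subset)
  show "{card I | I. I \<subseteq> F \<and> rig_indep d p I} \<subseteq> {..card F}"
    using card_mono[OF assms] by auto
qed simp

lemma card_le_rig_rank_at: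
  assumes "finite F" "I \<subseteq> F" "rig_indep d p I"
  shows "card I \<le> rig_rank_at d p F"
  unfolding rig_rank_at_def
  by (rule Max_ge[OF finite_rig_indep_cards[OF assms(1)]]) (use assms(2,3) in blast)

lemma rig_rank_at_basis:
  assumes "finite F"
  obtains I where "I \<subseteq> F" "rig_indep d p I" "card I = rig_rank_at d p F"
proof -
  have "{card I | I. I \<subseteq> F \<and> rig_indep d p I} \<noteq> {}"
    using rig_indep_empty[of d p] by auto
  with finite_rig_indep_cards[OF assms]
  have "rig_rank_at d p F \<in> {card I | I. I \<subseteq> F \<and> rig_indep d p I}"
    unfolding rig_rank_at_def by (rule Max_in)
  then obtain I where "I \<subseteq> F" "rig_indep d p I" "card I = rig_rank_at d p F" by auto
  then show ?thesis by (rule that)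
qed

lemma rig_rank_at_Diff_singleton_ge:
  assumes "finite F"
  shows "rig_rank_at d p F - 1 \<le> rig_rank_at d p (F - {e})"
proof -
  obtain I where I: "I \<subseteq> F" "rig_indep d p I" "card I = rig_rank_at d p F"
    using rig_rank_at_basis[OF assms] by blast
  have "finite I" using I(1) assms by (rule finite_subset)
  have "rig_indep d p (I - {e})" using rig_indep_subset[OF \<open>finite I\<close> _ I(2)] by blast
  then have "card (I - {e}) \<le> rig_rank_at d p (F - {e})"
    using I(1) assms by (intro card_le_rig_rank_at) auto
  moreover have "card I - 1 \<le> card (I - {e})"
    using \<open>finite I\<close> by (simp add: card_Diff_singleton_if)
  ultimately show ?thesis using I(3) by simp
qed

text \<open>Matroid exchange: if \<open>e\<close> lies in the span of an independent subset of \<open>F - {e}\<close>,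
  a maximum independent subset of \<open>F\<close> through \<open>e\<close> can trade \<open>e\<close> for an element of that
  subset.\<close>
lemma rig_rank_at_le_Diff_singleton:
  assumes "finite F" "K \<subseteq> F - {e}" "rig_indep d p K" "\<not> rig_indep d p (insert e K)"
  shows "rig_rank_at d p F \<le> rig_rank_at d p (F - {e})"
proof -
  obtain I where I: "I \<subseteq> F" "rig_indep d p I" "card I = rig_rank_at d p F"
    using rig_rank_at_basis[OF assms(1)] by blast
  have fin: "finite I" "finite K" using I(1) assms(1,2) by (auto intro: finite_subset)
  show ?thesis
  proof (cases "e \<in> I")
    case False
    then have "I \<subseteq> F - {e}" using I(1) by blast
    with I(2,3) assms(1) show ?thesis using card_le_rig_rank_at[of "F - {e}" I d p] by simp
  next
    case True
    define I0 where "I0 = I - {e}"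
    have I0: "finite I0" "rig_indep d p I0" "I = insert e I0" "e \<notin> I0"
      using fin(1) I(2) True by (auto simp: I0_def intro: rig_indep_subset)
    have "\<not> in_rig_span d p I0 e"
      using rig_indep_insert_iff[OF I0(1,2,4)] I(2) I0(3) by simp
    moreover have "e \<notin> K" using assms(2) by blast
    then have "in_rig_span d p K e" using rig_indep_insert_iff[OF fin(2) assms(3)] assms(4) by simp
    ultimately obtain f where f: "f \<in> K" "\<not> in_rig_span d p I0 f"
      using in_rig_span_trans[of K d p I0 e] by blast
    then have "f \<notin> I0" using in_rig_span_mem[OF I0(1)] by blast
    then have "rig_indep d p (insert f I0)" "card (insert f I0) = card I"
      using rig_indep_insert_iff[OF I0(1,2)] f(2) I0 by simp_all
    moreover have "insert f I0 \<subseteq> F - {e}" using f(1) assms(2) I(1) by (auto simp: I0_def)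
    ultimately show ?thesis using card_le_rig_rank_at[of "F - {e}" "insert f I0" d p] assms(1) I(3)
      by simp
  qed
qed

text \<open>The independence of \<open>{e}\<close> excludes rank \<open>0\<close>, where truncated subtraction would make
  the left-hand side hold vacuously.\<close>
lemma rig_rank_at_Diff_singleton_iff:
  assumes "finite F" "e \<in> F" "rig_indep d p {e}"
  shows "rig_rank_at d p (F - {e}) = rig_rank_at d p F - 1 \<longleftrightarrow>
    (\<forall>K \<subseteq> F - {e}. rig_indep d p K \<longrightarrow> rig_indep d p (insert e K))"
proof
  assume drop: "rig_rank_at d p (F - {e}) = rig_rank_at d p F - 1"
  have "card {e} \<le> rig_rank_at d p F" using assms by (intro card_le_rig_rank_at) auto
  with drop have less: "rig_rank_at d p (F - {e}) < rig_rank_at d p F" by simp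
  show "\<forall>K \<subseteq> F - {e}. rig_indep d p K \<longrightarrow> rig_indep d p (insert e K)"
  proof (intro allI impI)
    fix K assume K: "K \<subseteq> F - {e}" "rig_indep d p K"
    show "rig_indep d p (insert e K)"
    proof (rule ccontr)
      assume "\<not> rig_indep d p (insert e K)"
      with K have "rig_rank_at d p F \<le> rig_rank_at d p (F - {e})"
        by (intro rig_rank_at_le_Diff_singleton[OF assms(1)])
      with less show False by simp
    qed
  qed
next
  assume extend: "\<forall>K \<subseteq> F - {e}. rig_indep d p K \<longrightarrow> rig_indep d p (insert e K)"
  have "finite (F - {e})" using assms(1) by simp
  then obtain I where I: "I \<subseteq> F - {e}" "rig_indep d p I" "card I = rig_rank_at d p (F - {e})"
    by (rule rig_rank_at_basis)
  then have "card (insert e I) \<le> rig_rank_at d p F"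
    using extend assms(1,2) by (intro card_le_rig_rank_at) auto
  moreover have "card (insert e I) = card I + 1"
    using I(1) finite_subset[OF I(1) \<open>finite (F - {e})\<close>] by (simp add: subset_Diff_insert)
  ultimately show "rig_rank_at d p (F - {e}) = rig_rank_at d p F - 1"
    using I(3) rig_rank_at_Diff_singleton_ge[OF assms(1), of d p e] by linarith
qed

section \<open>Relabelling vertices and bridges\<close>

lemma rig_row_image:
  assumes "inj_on \<psi> U" "e \<subseteq> U" "z \<in> U" "\<forall>y\<in>U. r (\<psi> y) = q y"
  shows "rig_row r (\<psi> ` e) (\<psi> z) i = rig_row q e z i"
proof -
  have mem: "\<psi> z \<in> \<psi> ` e \<longleftrightarrow> z \<in> e" using assms(1-3) by (auto dest: inj_onD)
  have diff: "\<psi> ` e - {\<psi> z} = \<psi> ` (e - {z})" using assms(1-3) by (auto dest: inj_onD)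
  have "inj_on \<psi> (e - {z})" using assms(1,2) by (auto intro: inj_on_subset)
  then have "(\<Sum>w\<in>\<psi> ` (e - {z}). r (\<psi> z) i - r w i) = (\<Sum>w\<in>e - {z}. q z i - q w i)"
    using assms(2-4) by (subst sum.reindex) (auto intro!: sum.cong)
  then show ?thesis unfolding rig_row_def mem diff by simp
qed

lemma rig_comb_image_eq_0_iff:
  assumes "inj_on \<psi> U" "\<forall>e\<in>J. e \<subseteq> U" "\<forall>y\<in>U. r (\<psi> y) = q y"
  shows "(\<forall>z i. i < d \<longrightarrow> (\<Sum>e\<in>J. c e * rig_row r (\<psi> ` e) z i) = 0) \<longleftrightarrow>
    (\<forall>z i. i < d \<longrightarrow> (\<Sum>e\<in>J. c e * rig_row q e z i) = 0)"
proof -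
  have at_image: "(\<Sum>e\<in>J. c e * rig_row r (\<psi> ` e) (\<psi> z) i) = (\<Sum>e\<in>J. c e * rig_row q e z i)"
    if "z \<in> U" for z i
    using rig_row_image[OF assms(1) _ that assms(3)] assms(2) by (intro sum.cong) auto
  have off_image: "rig_row r (\<psi> ` e) z i = 0" if "e \<in> J" "z \<notin> \<psi> ` U" for e z i
    using assms(2) that by (intro rig_row_notin) blast
  have off_U: "rig_row q e z i = 0" if "e \<in> J" "z \<notin> U" for e z i
    using assms(2) that by (intro rig_row_notin) blast
  show ?thesis
  proof (intro iffI allI impI)
    fix z i assume r0: "\<forall>z i. i < d \<longrightarrow> (\<Sum>e\<in>J. c e * rig_row r (\<psi> ` e) z i) = 0"
      and "i < d"
    show "(\<Sum>e\<in>J. c e * rig_row q e z i) = 0"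
    proof (cases "z \<in> U")
      case True
      from r0 \<open>i < d\<close> have "(\<Sum>e\<in>J. c e * rig_row r (\<psi> ` e) (\<psi> z) i) = 0" by blast
      with at_image[OF True] show ?thesis by simp
    qed (simp add: off_U)
  next
    fix z i assume "\<forall>z i. i < d \<longrightarrow> (\<Sum>e\<in>J. c e * rig_row q e z i) = 0" "i < d"
    then show "(\<Sum>e\<in>J. c e * rig_row r (\<psi> ` e) z i) = 0"
      using at_image off_image by (cases "z \<in> \<psi> ` U") auto
  qed
qed

lemma rig_indep_image_iff:
  assumes "inj_on \<psi> U" "\<forall>e\<in>J. e \<subseteq> U" "\<forall>y\<in>U. r (\<psi> y) = q y"
  shows "rig_indep d r ((`) \<psi> ` J) \<longleftrightarrow> rig_indep d q J"
proof -
  have inj: "inj_on ((`) \<psi>) J"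
    using assms(1,2) by (auto simp: inj_on_def inj_on_image_eq_iff)
  have reindex: "(\<Sum>e'\<in>(`) \<psi> ` J. c e' * rig_row r e' z i) =
      (\<Sum>e\<in>J. c (\<psi> ` e) * rig_row r (\<psi> ` e) z i)" for c z i
    by (simp add: sum.reindex[OF inj])
  note comb_iff = rig_comb_image_eq_0_iff[OF assms]
  show ?thesis
  proof
    assume indep: "rig_indep d r ((`) \<psi> ` J)"
    show "rig_indep d q J"
      unfolding rig_indep_def
    proof (intro allI impI)
      fix c assume "\<forall>z i. i < d \<longrightarrow> (\<Sum>e\<in>J. c e * rig_row q e z i) = 0"
      define c' where "c' = c \<circ> the_inv_into J ((`) \<psi>)"
      have c': "c' (\<psi> ` e) = c e" if "e \<in> J" for e
        using the_inv_into_f_f[OF inj that] by (simp add: c'_def)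
      have "\<forall>z i. i < d \<longrightarrow> (\<Sum>e'\<in>(`) \<psi> ` J. c' e' * rig_row r e' z i) = 0"
        using comb_iff[of d c] \<open>\<forall>z i. _\<close> by (simp add: reindex c' cong: sum.cong)
      with indep have "\<forall>e'\<in>(`) \<psi> ` J. c' e' = 0" unfolding rig_indep_def by blast
      then show "\<forall>e\<in>J. c e = 0" using c' by auto
    qed
  next
    assume indep: "rig_indep d q J"
    show "rig_indep d r ((`) \<psi> ` J)"
      unfolding rig_indep_def
    proof (intro allI impI)
      fix c assume "\<forall>z i. i < d \<longrightarrow> (\<Sum>e'\<in>(`) \<psi> ` J. c e' * rig_row r e' z i) = 0"
      then have "\<forall>z i. i < d \<longrightarrow> (\<Sum>e\<in>J. c (\<psi> ` e) * rig_row q e z i) = 0"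
        using comb_iff[of d "\<lambda>e. c (\<psi> ` e)"] by (simp add: reindex)
      then have "\<forall>e\<in>J. c (\<psi> ` e) = 0" using rig_indepD[OF indep, of "\<lambda>e. c (\<psi> ` e)"] by blast
      then show "\<forall>e'\<in>(`) \<psi> ` J. c e' = 0" by blast
    qed
  qed
qed

lemma rig_indep_generic_image_iff:
  assumes "finite U" "finite U'" "inj_on \<psi> U'" "\<psi> ` U' \<subseteq> U"
    and "generic d U p" "generic d U' q" "finite J" "\<forall>e\<in>J. e \<subseteq> U'"
  shows "rig_indep d p ((`) \<psi> ` J) \<longleftrightarrow> rig_indep d q J"
proof
  assume "rig_indep d p ((`) \<psi> ` J)"
  then have "rig_indep d (p \<circ> \<psi>) J"
    using rig_indep_image_iff[OF assms(3,8), of p "p \<circ> \<psi>"] by simp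
  then show "rig_indep d q J" by (rule rig_indep_generic[OF assms(2,6,7,8)])
next
  assume "rig_indep d q J"
  then have "rig_indep d (q \<circ> inv_into U' \<psi>) ((`) \<psi> ` J)"
    using rig_indep_image_iff[OF assms(3,8), of "q \<circ> inv_into U' \<psi>" q] assms(3) by simp
  moreover have "\<forall>e\<in>(`) \<psi> ` J. e \<subseteq> U" using assms(4,8) by blast
  ultimately show "rig_indep d p ((`) \<psi> ` J)"
    using rig_indep_generic[OF assms(1,5)] assms(7) by blast
qed

lemma simple_graph_edges:
  assumes "simple_graph V E"
  shows "finite E" "\<forall>e\<in>E. e \<subseteq> V"
proof -
  show sub: "\<forall>e\<in>E. e \<subseteq> V" using assms by (fastforce simp: simple_graph_def)
  then have "E \<subseteq> Pow V" by blast
  then show "finite E" using assms by (simp add: simple_graph_def finite_subset)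
qed

lemma simple_graph_del_vertex:
  assumes "simple_graph V E"
  shows "simple_graph (V - {w}) (del_vertex_edges E w)"
  unfolding simple_graph_def del_vertex_edges_def
proof (intro conjI ballI)
  show "finite (V - {w})" using assms by (simp add: simple_graph_def)
  fix e assume "e \<in> {e \<in> E. w \<notin> e}"
  then have "e \<in> E" "w \<notin> e" by simp_all
  moreover obtain x y where "x \<noteq> y" "x \<in> V" "y \<in> V" "e = {x, y}"
    using assms \<open>e \<in> E\<close> unfolding simple_graph_def by blast
  ultimately show "\<exists>x y. x \<noteq> y \<and> x \<in> V - {w} \<and> y \<in> V - {w} \<and> e = {x, y}" by blast
qed

lemma rig_bridge_iff:
  assumes "simple_graph V E" "0 < d" "{x, y} \<in> E" "x \<noteq> y"
  shows "rig_bridge d V E {x, y} \<longleftrightarrow>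
    (\<forall>K \<subseteq> E - {{x, y}}. rig_indep d (SOME p. generic d V p) K \<longrightarrow>
      rig_indep d (SOME p. generic d V p) (insert {x, y} K))"
proof -
  have "finite V" "finite E" "\<forall>e\<in>E. e \<subseteq> V"
    using assms(1) simple_graph_edges by (auto simp: simple_graph_def)
  moreover from this(3) assms(3) have "x \<in> V" "y \<in> V" by auto
  ultimately have "rig_indep d (SOME p. generic d V p) {{x, y}}"
    by (intro rig_indep_generic_edge[OF _ generic_some] assms(2,4))
  then show ?thesis
    using rig_rank_at_Diff_singleton_iff[OF \<open>finite E\<close> assms(3)] assms(3)
    by (simp add: rig_bridge_def rig_rank_eq_rig_rank_at)
qed

lemma merge_vertex_edges_subset:
  assumes "simple_graph V E" "nbhd E v \<subseteq> nbhd E w \<union> {w}"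
    and "K \<subseteq> del_vertex_edges E w - {{u, v}}"
  shows "(`) (id(v := w)) ` K \<subseteq> E - {{u, w}}"
proof
  fix e' assume "e' \<in> (`) (id(v := w)) ` K"
  then obtain f where f: "f \<in> K" "e' = id(v := w) ` f" by blast
  then have fE: "f \<in> E" "w \<notin> f" "f \<noteq> {u, v}" using assms(3) by (auto simp: del_vertex_edges_def)
  show "e' \<in> E - {{u, w}}"
  proof (cases "v \<in> f")
    case True
    obtain a b where "a \<noteq> b" "f = {a, b}" using assms(1) fE(1) unfolding simple_graph_def by blast
    with True obtain x where x: "f = {v, x}" "x \<noteq> v" by (metis empty_iff insert_commute insert_iff)
    with fE(2) have "x \<noteq> w" by blast
    have "e' = {w, x}" using f(2) x by auto
    have "x \<in> nbhd E v" using fE(1) x(1) by (simp add: nbhd_def)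
    with assms(2) \<open>x \<noteq> w\<close> have "{w, x} \<in> E" by (auto simp: nbhd_def)
    moreover have "x \<noteq> u" using fE(3) x(1) by auto
    with \<open>x \<noteq> w\<close> have "{w, x} \<noteq> {u, w}" by (auto simp: doubleton_eq_iff)
    ultimately show ?thesis using \<open>e' = {w, x}\<close> by simp
  next
    case False
    then have "id(v := w) ` f = id ` f" by (intro image_cong) auto
    with f(2) fE show ?thesis by auto
  qed
qed

lemma rig_indep_generic_merge_iff:
  assumes "simple_graph V E" "w \<in> V" "K \<subseteq> del_vertex_edges E w"
  shows "rig_indep d (SOME p. generic d V p) ((`) (id(v := w)) ` K) \<longleftrightarrow>
    rig_indep d (SOME q. generic d (V - {w}) q) K"
proof (rule rig_indep_generic_image_iff[where U = V and U' = "V - {w}"])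
  have "finite V" using assms(1) by (simp add: simple_graph_def)
  then show "finite V" "finite (V - {w})" "generic d V (SOME p. generic d V p)"
    "generic d (V - {w}) (SOME q. generic d (V - {w}) q)"
    by (simp_all add: generic_some)
  show "inj_on (id(v := w)) (V - {w})" "id(v := w) ` (V - {w}) \<subseteq> V"
    using assms(2) by (auto simp: inj_on_def)
  have "finite (del_vertex_edges E w)" "\<forall>e\<in>del_vertex_edges E w. e \<subseteq> V - {w}"
    using simple_graph_edges[OF simple_graph_del_vertex[OF assms(1), of w]] by simp_all
  then show "finite K" "\<forall>e\<in>K. e \<subseteq> V - {w}" using assms(3) by (auto intro: finite_subset)
qed

theorem proposition2p7:
  fixes V :: "'a set" and E :: "'a set set" and d :: nat and u v w :: 'a
  assumes "simple_graph V E"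
    and "d \<ge> 1"
    and "u \<in> V" "v \<in> V" "w \<in> V"
    and "u \<noteq> v" "u \<noteq> w" "v \<noteq> w"
    and "u \<in> nbhd E v"
    and "nbhd E v \<subseteq> nbhd E w \<union> {w}"
    and "rig_bridge d V E {u, w}"
  shows "rig_bridge d (V - {w}) (del_vertex_edges E w) {u, v}"
proof -
  let ?\<psi> = "id(v := w)" and ?E' = "del_vertex_edges E w"
  have "0 < d" using assms(2) by simp
  define p where "p = (SOME p. generic d V p)"
  define q where "q = (SOME q. generic d (V - {w}) q)"
  have G': "simple_graph (V - {w}) ?E'" by (rule simple_graph_del_vertex[OF assms(1)])
  have "{u, v} \<in> ?E'" using assms(7-9) by (auto simp: del_vertex_edges_def nbhd_def insert_commute)
  have "{u, w} \<in> E" using assms(11) by (simp add: rig_bridge_def)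
  have image_indep: "rig_indep d p ((`) ?\<psi> ` K) \<longleftrightarrow> rig_indep d q K" if "K \<subseteq> ?E'" for K
    unfolding p_def q_def by (rule rig_indep_generic_merge_iff[OF assms(1,5) that])
  have uw_bridge: "\<forall>K \<subseteq> E - {{u, w}}. rig_indep d p K \<longrightarrow> rig_indep d p (insert {u, w} K)"
    using assms(11) rig_bridge_iff[OF assms(1) \<open>0 < d\<close> \<open>{u, w} \<in> E\<close> assms(7)]
    by (simp add: p_def)
  show ?thesis
    unfolding rig_bridge_iff[OF G' \<open>0 < d\<close> \<open>{u, v} \<in> ?E'\<close> assms(6)] q_def[symmetric]
  proof (intro allI impI)
    fix K assume K: "K \<subseteq> ?E' - {{u, v}}" and "rig_indep d q K"
    then have "rig_indep d p ((`) ?\<psi> ` K)" using image_indep by blast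
    moreover have "(`) ?\<psi> ` K \<subseteq> E - {{u, w}}" by (rule merge_vertex_edges_subset[OF assms(1,10) K])
    ultimately have "rig_indep d p (insert {u, w} ((`) ?\<psi> ` K))" using uw_bridge by blast
    moreover have "insert {u, w} ((`) ?\<psi> ` K) = (`) ?\<psi> ` insert {u, v} K" using assms(6) by auto
    ultimately have "rig_indep d p ((`) ?\<psi> ` insert {u, v} K)" by (simp only:)
    moreover have "insert {u, v} K \<subseteq> ?E'" using K \<open>{u, v} \<in> ?E'\<close> by blast
    ultimately show "rig_indep d q (insert {u, v} K)" using image_indep by blast
  qed
qed

end
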